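(* For $n\ge 3$, $M_2(WC_n)\simeq M_2(CC_n)$, where $WC_n$ is the fully whiskered $2n$-cycle graph and $CC_n$ is the clawed $n$-cycle.
   Context: The fully whiskered graph of a graph $G$ is obtained by attaching a leaf to every vertex of $G$; $WC_n$ is the fully whiskered graph of the cycle on $2n$ vertices. For a graph $G$ of maximum degree at most $3$, the clawed graph $CG$ is obtained by subdividing every edge of $G$ and then attaching new leaves to every original vertex so that every original vertex has degree exactly $3$; $CC_n$ is the clawed graph of the cycle on $n$ vertices. $M_2(G)$ is the simplicial complex whose vertices are the edges of $G$ and whose faces are the $2$-matchings of $G$ (edge sets in which every vertex has degree at most $2$). *)

theory Defs
  imports "HOL-Analysis.Analysis"
begin

text \<open>Graphs are given by a vertex set V and a set E of 2-element vertex sets (edges).\<close>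

definition deg :: "'a set set \<Rightarrow> 'a \<Rightarrow> nat" where
  "deg E v = card {e \<in> E. v \<in> e}"

definition cycle_vertices :: "nat \<Rightarrow> nat set" where
  "cycle_vertices m = {..<m}"

definition cycle_edges :: "nat \<Rightarrow> nat set set" where
  "cycle_edges m = {{i, Suc i mod m} | i. i < m}"

text \<open>Fully whiskered graph: Inl v are the original vertices, Inr v the leaf attached to v.\<close>
definition whiskered_edges :: "'a set \<Rightarrow> 'a set set \<Rightarrow> ('a + 'a) set set" where
  "whiskered_edges V E =
     {{Inl u, Inl v} | u v. {u, v} \<in> E} \<union> {{Inl v, Inr v} | v. v \<in> V}"

text \<open>Clawed graph: every edge e is subdivided by a new vertex Sub e, and every original
  vertex v receives 3 - deg v new leaves Leaf v k.\<close>
datatype 'a claw_vertex = Orig 'a | Sub "'a set" | Leaf 'a nat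

definition clawed_edges :: "'a set \<Rightarrow> 'a set set \<Rightarrow> 'a claw_vertex set set" where
  "clawed_edges V E =
     {{Orig u, Sub e} | u e. e \<in> E \<and> u \<in> e}
     \<union> {{Orig v, Leaf v k} | v k. v \<in> V \<and> k < 3 - deg E v}"

text \<open>M_2(G): faces are the 2-matchings (edge sets with every vertex of degree at most 2).\<close>
definition two_matchings :: "'a set set \<Rightarrow> 'a set set set" where
  "two_matchings E = {F. F \<subseteq> E \<and> (\<forall>v. card {e \<in> F. v \<in> e} \<le> 2)}"

text \<open>Geometric realization of a (finite) abstract simplicial complex K with vertices of type 'v:
  the functions 'v => real that are nonnegative, whose support is a face of K, and which sum to 1;
  topologized as a subspace of the product topology on 'v => real.\<close>
definition geom_real :: "'v set set \<Rightarrow> ('v \<Rightarrow> real) set" where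
  "geom_real K = {f. (\<forall>v. 0 \<le> f v) \<and> {v. f v \<noteq> 0} \<in> K \<and> (\<Sum>v\<in>{v. f v \<noteq> 0}. f v) = 1}"

end

theory Submission
  imports Defs
begin

(* Both graphs are ends of a chain of subgraphs of WC_n: the 2n-cycle with its whiskers at all
   even vertices and at the odd vertices below 2m.  For m = n this is WC_n; for m = 0 it is a copy
   of CC_n, the even vertices being the vertices of the n-cycle and the odd ones the subdivision
   vertices.  Removing the whisker u at the odd vertex 2j+1 does not change the homotopy type of
   M_2: a 2-matching containing u and the edge b = {2j+1, 2j+2} cannot contain {2j, 2j+1}, so it
   extends by the whisker at 2j, and a 2-matching containing u but not b extends by the whisker at
   2j+2.  These two extensions let the realisation deformation retract onto the faces avoiding u
   along three straight-line homotopies. *)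

section \<open>Geometric realisations of finite complexes\<close>

definition support :: "('v \<Rightarrow> real) \<Rightarrow> 'v set" where
  "support f = {v. f v \<noteq> 0}"

definition finite_complex :: "'v set \<Rightarrow> 'v set set \<Rightarrow> bool" where
  "finite_complex V K \<longleftrightarrow> finite V \<and> K \<subseteq> Pow V \<and> (\<forall>\<sigma>\<in>K. \<forall>\<tau>\<subseteq>\<sigma>. \<tau> \<in> K)"

lemma finite_complex_downward_closed:
  "finite_complex V K \<Longrightarrow> \<sigma> \<in> K \<Longrightarrow> \<tau> \<subseteq> \<sigma> \<Longrightarrow> \<tau> \<in> K"
  unfolding finite_complex_def by blast

lemma mem_geom_real_iff:
  assumes "finite V" "K \<subseteq> Pow V"
  shows "f \<in> geom_real K \<longleftrightarrow> (\<forall>v. 0 \<le> f v) \<and> support f \<in> K \<and> sum f V = 1"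
proof -
  have "sum f V = sum f (support f)" if "support f \<in> K"
    using that assms by (intro sum.mono_neutral_right) (auto simp: support_def)
  then show ?thesis
    by (auto simp: geom_real_def support_def)
qed

lemma continuous_on_coordinate [continuous_intros]:
  "continuous_on S (\<lambda>f :: 'a \<Rightarrow> 'b::topological_space. f i)"
  by (rule continuous_on_subset[OF continuous_on_product_coordinates]) simp

lemma continuous_on_fun_upd [continuous_intros]:
  fixes f :: "'a::topological_space \<Rightarrow> 'b \<Rightarrow> 'c::topological_space"
  assumes "continuous_on S f" and "continuous_on S g"
  shows "continuous_on S (\<lambda>x. (f x)(a := g x))"
proof (rule continuous_on_coordinatewise_then_product)
  fix i
  show "continuous_on S (\<lambda>x. ((f x)(a := g x)) i)"
    by (cases "i = a") (simp_all add: assms continuous_on_product_then_coordinatewise)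
qed

lemma homotopic_geom_real_straight_line:
  assumes K: "finite_complex V K"
    and \<phi>: "continuous_on S \<phi>" "\<phi> ` S \<subseteq> geom_real K"
    and \<psi>: "continuous_on S \<psi>" "\<psi> ` S \<subseteq> geom_real K"
    and joint: "\<And>x. x \<in> S \<Longrightarrow> support (\<phi> x) \<union> support (\<psi> x) \<in> K"
  shows "homotopic_with (\<lambda>_. True) (top_of_set S) (top_of_set (geom_real K)) \<phi> \<psi>"
  unfolding homotopic_with_def
proof (intro exI conjI allI ballI)
  let ?h = "\<lambda>p v. (1 - fst p) * \<phi> (snd p) v + fst p * \<psi> (snd p) v"
  have fin: "finite V" and KV: "K \<subseteq> Pow V"
    using K by (auto simp: finite_complex_def)
  have "continuous_on ({0..1::real} \<times> S) ?h"
  proof (rule continuous_on_coordinatewise_then_product)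
    fix v
    have "continuous_on ({0..1::real} \<times> S) (\<lambda>p. \<phi> (snd p) v)"
      by (rule continuous_on_compose2[OF continuous_on_product_then_coordinatewise[OF \<phi>(1)]
            continuous_on_snd]) auto
    moreover have "continuous_on ({0..1::real} \<times> S) (\<lambda>p. \<psi> (snd p) v)"
      by (rule continuous_on_compose2[OF continuous_on_product_then_coordinatewise[OF \<psi>(1)]
            continuous_on_snd]) auto
    ultimately show "continuous_on ({0..1} \<times> S) (\<lambda>p. ?h p v)"
      by (intro continuous_intros)
  qed
  moreover have "?h (t, x) \<in> geom_real K" if "t \<in> {0..1}" "x \<in> S" for t x
  proof -
    have \<phi>x: "\<phi> x \<in> geom_real K" and \<psi>x: "\<psi> x \<in> geom_real K"
      using \<phi>(2) \<psi>(2) \<open>x \<in> S\<close> by auto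
    have "support (?h (t, x)) \<subseteq> support (\<phi> x) \<union> support (\<psi> x)"
      by (auto simp: support_def)
    then have "support (?h (t, x)) \<in> K"
      using finite_complex_downward_closed[OF K joint[OF \<open>x \<in> S\<close>]] by blast
    moreover have "sum (?h (t, x)) V = 1"
      using \<phi>x \<psi>x by (simp add: mem_geom_real_iff[OF fin KV] sum.distrib flip: sum_distrib_left)
    ultimately show ?thesis
      using \<phi>x \<psi>x that by (simp add: mem_geom_real_iff[OF fin KV])
  qed
  ultimately show "continuous_map (prod_topology (top_of_set {0..1}) (top_of_set S))
      (top_of_set (geom_real K)) ?h"
    by auto
qed auto

definition relabel :: "('b \<Rightarrow> 'a) \<Rightarrow> 'b set \<Rightarrow> ('a \<Rightarrow> real) \<Rightarrow> 'b \<Rightarrow> real" where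
  "relabel \<rho> W f = (\<lambda>w. if w \<in> W then f (\<rho> w) else 0)"

lemma continuous_on_relabel: "continuous_on S (relabel \<rho> W)"
proof (rule continuous_on_coordinatewise_then_product)
  fix w
  show "continuous_on S (\<lambda>f. relabel \<rho> W f w)"
    by (cases "w \<in> W") (simp_all add: relabel_def continuous_intros)
qed

lemma relabel_mem_geom_real:
  assumes V: "finite V" "K \<subseteq> Pow V" and LW: "L \<subseteq> Pow W" and bij: "bij_betw \<rho> W V"
    and faces: "\<And>\<sigma>. \<sigma> \<in> K \<Longrightarrow> \<rho> -` \<sigma> \<inter> W \<in> L"
    and f: "f \<in> geom_real K"
  shows "relabel \<rho> W f \<in> geom_real L"
proof -
  have W: "finite W"
    using bij V bij_betw_finite by blast
  have f': "(\<forall>v. 0 \<le> f v) \<and> support f \<in> K \<and> sum f V = 1"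
    using f by (simp add: mem_geom_real_iff[OF V])
  have "support (relabel \<rho> W f) = \<rho> -` support f \<inter> W"
    by (auto simp: relabel_def support_def)
  moreover have "sum (relabel \<rho> W f) W = sum f V"
    using sum.reindex_bij_betw[OF bij, of f] by (simp add: relabel_def)
  ultimately show ?thesis
    using f' faces by (simp add: mem_geom_real_iff[OF W LW] relabel_def)
qed

lemma relabel_relabel:
  assumes "\<And>v. v \<in> V \<Longrightarrow> \<psi> v \<in> W \<and> \<rho> (\<psi> v) = v" and "support f \<subseteq> V"
  shows "relabel \<psi> V (relabel \<rho> W f) = f"
  using assms by (fastforce simp: relabel_def support_def)

lemma homeomorphic_geom_real_if_isomorphic:
  assumes "finite V" and bij: "bij_betw \<psi> V W" and KV: "K \<subseteq> Pow V" and LW: "L \<subseteq> Pow W"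
    and iso: "\<And>\<sigma>. \<sigma> \<subseteq> V \<Longrightarrow> \<sigma> \<in> K \<longleftrightarrow> \<psi> ` \<sigma> \<in> L"
  shows "top_of_set (geom_real K) homeomorphic_space top_of_set (geom_real L)"
proof -
  define \<rho> where "\<rho> = inv_into V \<psi>"
  have bij': "bij_betw \<rho> W V"
    using bij by (simp add: \<rho>_def bij_betw_inv_into)
  have \<psi>\<rho>: "\<rho> w \<in> V \<and> \<psi> (\<rho> w) = w" if "w \<in> W" for w
    using bij bij' that by (auto simp: \<rho>_def bij_betw_inv_into_right dest: bij_betwE)
  have \<rho>\<psi>: "\<psi> v \<in> W \<and> \<rho> (\<psi> v) = v" if "v \<in> V" for v
    using bij that by (simp add: \<rho>_def bij_betw_inv_into_left bij_betwE)
  have "finite W"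
    using bij \<open>finite V\<close> bij_betw_finite by blast
  have to_L: "relabel \<rho> W f \<in> geom_real L" if "f \<in> geom_real K" for f
  proof (rule relabel_mem_geom_real[OF \<open>finite V\<close> KV LW bij' _ that])
    fix \<sigma> assume "\<sigma> \<in> K"
    then have "\<rho> -` \<sigma> \<inter> W = \<psi> ` \<sigma>"
      using KV \<psi>\<rho> \<rho>\<psi> by force
    then show "\<rho> -` \<sigma> \<inter> W \<in> L"
      using iso KV \<open>\<sigma> \<in> K\<close> by auto
  qed
  have to_K: "relabel \<psi> V g \<in> geom_real K" if "g \<in> geom_real L" for g
  proof (rule relabel_mem_geom_real[OF \<open>finite W\<close> LW KV bij _ that])
    fix \<tau> assume "\<tau> \<in> L"
    then have "\<psi> ` (\<psi> -` \<tau> \<inter> V) = \<tau>"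
      using LW \<psi>\<rho> by force
    then show "\<psi> -` \<tau> \<inter> V \<in> K"
      using iso[of "\<psi> -` \<tau> \<inter> V"] \<open>\<tau> \<in> L\<close> by auto
  qed
  have "support f \<subseteq> V" if "f \<in> geom_real K" for f
    using that KV by (auto simp: mem_geom_real_iff[OF \<open>finite V\<close> KV])
  moreover have "support g \<subseteq> W" if "g \<in> geom_real L" for g
    using that LW by (auto simp: mem_geom_real_iff[OF \<open>finite W\<close> LW])
  ultimately have "homeomorphic_maps (top_of_set (geom_real K)) (top_of_set (geom_real L))
      (relabel \<rho> W) (relabel \<psi> V)"
    using to_L to_K
    by (auto simp: homeomorphic_maps_def continuous_map_subtopology_eu continuous_on_relabel
        relabel_relabel \<rho>\<psi> \<psi>\<rho>)
  then show ?thesis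
    unfolding homeomorphic_space_def by blast
qed

section \<open>Deleting a vertex\<close>

definition move_mass :: "'v \<Rightarrow> 'v \<Rightarrow> real \<Rightarrow> ('v \<Rightarrow> real) \<Rightarrow> 'v \<Rightarrow> real" where
  "move_mass x y t f = f(x := f x - t, y := f y + t)"

lemma move_mass_zero [simp]: "move_mass x y 0 f = f"
  by (simp add: move_mass_def)

lemma move_mass_other [simp]: "v \<noteq> x \<Longrightarrow> v \<noteq> y \<Longrightarrow> move_mass x y t f v = f v"
  by (simp add: move_mass_def)

lemma move_mass_source [simp]: "x \<noteq> y \<Longrightarrow> move_mass x y t f x = f x - t"
  by (simp add: move_mass_def)

lemma sum_move_mass:
  assumes "finite V" "x \<in> V" "y \<in> V" "x \<noteq> y"
  shows "sum (move_mass x y t f) V = sum f V"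
proof -
  have "sum (move_mass x y t f) V = sum f V - f x - f y + (f x - t) + (f y + t)"
    using assms by (simp add: move_mass_def sum.remove[of V x] sum.remove[of "V - {x}" y]
        sum.cong[of _ _ "f(x := f x - t, y := f y + t)" f])
  then show ?thesis
    by simp
qed

lemma move_mass_nonneg:
  assumes "\<forall>v. 0 \<le> f v" "0 \<le> t" "t \<le> f x"
  shows "0 \<le> move_mass x y t f v"
  using assms by (simp add: move_mass_def)

lemma support_move_mass:
  assumes "0 \<le> t" "t \<le> f x"
  shows "support (move_mass x y t f) \<subseteq> insert y (support f)"
  using assms by (auto simp: move_mass_def support_def)

locale removable_vertex =
  fixes V :: "'v set" and K :: "'v set set" and u b l c :: 'v
  assumes complex: "finite_complex V K"
    and vertices: "u \<in> V" "b \<in> V" "l \<in> V" "c \<in> V"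
    and distinct: "u \<noteq> b" "u \<noteq> l" "b \<noteq> l" "u \<noteq> c"
    and extend_by_l: "\<And>\<sigma>. \<sigma> \<in> K \<Longrightarrow> u \<in> \<sigma> \<Longrightarrow> b \<in> \<sigma> \<Longrightarrow> insert l \<sigma> \<in> K"
    and extend_by_c: "\<And>\<sigma>. \<sigma> \<in> K \<Longrightarrow> u \<in> \<sigma> \<Longrightarrow> b \<notin> \<sigma> \<Longrightarrow> insert c \<sigma> \<in> K"
begin

text \<open>The deformation retraction onto the faces avoiding \<open>u\<close> is the straight-line path through
  three maps.  \<open>slide\<close> shifts weight from \<open>b\<close> to \<open>l\<close>, all of it once \<open>u\<close> carries more than 1/4;
  \<open>push\<close> then moves the weight of \<open>u\<close> above 1/4 to \<open>c\<close>, which is allowed because \<open>b\<close> has just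
  been emptied; \<open>retraction\<close> drops \<open>u\<close> and renormalises, the total weight left being at least 3/4.
  Each map stays in a common face with its predecessor.\<close>

definition slide :: "('v \<Rightarrow> real) \<Rightarrow> 'v \<Rightarrow> real" where
  "slide f = move_mass b l (min 1 (4 * f u) * f b) f"

definition push :: "('v \<Rightarrow> real) \<Rightarrow> 'v \<Rightarrow> real" where
  "push f = move_mass u c (max 0 (f u - 1/4)) (slide f)"

definition retraction :: "('v \<Rightarrow> real) \<Rightarrow> 'v \<Rightarrow> real" where
  "retraction f = (\<lambda>v. ((push f)(u := 0)) v / (1 - min (f u) (1/4)))"

lemma finite_vertices: "finite V"
  using complex by (simp add: finite_complex_def)

lemma face_subset: "\<sigma> \<in> K \<Longrightarrow> \<tau> \<subseteq> \<sigma> \<Longrightarrow> \<tau> \<in> K"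
  using finite_complex_downward_closed[OF complex] .

lemma mem_geom_real_K: "f \<in> geom_real K \<longleftrightarrow> (\<forall>v. 0 \<le> f v) \<and> support f \<in> K \<and> sum f V = 1"
  using complex by (simp add: mem_geom_real_iff finite_complex_def)

lemma mem_geom_real_delete: "f \<in> geom_real {\<sigma>\<in>K. u \<notin> \<sigma>} \<longleftrightarrow> f \<in> geom_real K \<and> f u = 0"
proof -
  have "finite V" "{\<sigma>\<in>K. u \<notin> \<sigma>} \<subseteq> Pow V"
    using complex by (auto simp: finite_complex_def)
  then show ?thesis
    by (auto simp: mem_geom_real_iff mem_geom_real_K support_def)
qed

lemma slide_u [simp]: "slide f u = f u"
  using distinct by (simp add: slide_def)

lemma slide_mem:
  assumes "f \<in> geom_real K"
  shows "slide f \<in> geom_real K" and "support f \<union> support (slide f) \<in> K"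
proof -
  define t where "t = min 1 (4 * f u) * f b"
  have slide: "slide f = move_mass b l t f"
    by (simp add: slide_def t_def)
  have f: "\<forall>v. 0 \<le> f v" "support f \<in> K" "sum f V = 1"
    using assms by (auto simp: mem_geom_real_K)
  have t: "0 \<le> t" "t \<le> f b"
    using f(1) by (auto simp: t_def intro: mult_left_le_one_le)
  show joint: "support f \<union> support (slide f) \<in> K"
  proof (cases "t = 0")
    case False
    then have "u \<in> support f" "b \<in> support f"
      by (auto simp: t_def support_def)
    then have "insert l (support f) \<in> K"
      using extend_by_l f(2) by blast
    moreover have "support (slide f) \<subseteq> insert l (support f)"
      unfolding slide using support_move_mass[where f = f, OF t] .
    ultimately show ?thesis
      using face_subset by blast
  qed (use f(2) slide in simp)
  have "sum (slide f) V = 1"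
    using f(3) vertices distinct finite_vertices by (simp add: slide sum_move_mass)
  moreover have "\<forall>v. 0 \<le> slide f v"
    using move_mass_nonneg[OF f(1) t] by (simp add: slide)
  ultimately show "slide f \<in> geom_real K"
    using face_subset[OF joint] by (simp add: mem_geom_real_K)
qed

lemma push_mem:
  assumes "f \<in> geom_real K"
  shows "push f \<in> geom_real K" and "support (slide f) \<union> support (push f) \<in> K"
proof -
  define s where "s = max 0 (f u - 1/4)"
  have push: "push f = move_mass u c s (slide f)"
    by (simp add: push_def s_def)
  have g: "\<forall>v. 0 \<le> slide f v" "support (slide f) \<in> K" "sum (slide f) V = 1"
    using slide_mem[OF assms] by (auto simp: mem_geom_real_K)
  have s: "0 \<le> s" "s \<le> slide f u"
    using assms by (auto simp: s_def mem_geom_real_K)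
  show joint: "support (slide f) \<union> support (push f) \<in> K"
  proof (cases "s = 0")
    case False
    then have "1/4 < f u"
      by (simp add: s_def)
    then have "b \<notin> support (slide f)" "u \<in> support (slide f)"
      using distinct by (simp_all add: slide_def support_def)
    then have "insert c (support (slide f)) \<in> K"
      using extend_by_c g(2) by blast
    moreover have "support (push f) \<subseteq> insert c (support (slide f))"
      unfolding push using support_move_mass[where f = "slide f", OF s] .
    ultimately show ?thesis
      using face_subset by blast
  qed (use g(2) push in simp)
  have "sum (push f) V = 1"
    using g(3) vertices distinct finite_vertices by (simp add: push sum_move_mass)
  moreover have "\<forall>v. 0 \<le> push f v"
    using move_mass_nonneg[OF g(1) s] by (simp add: push)
  ultimately show "push f \<in> geom_real K"
    using face_subset[OF joint] by (simp add: mem_geom_real_K)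
qed

lemma retraction_mem:
  assumes "f \<in> geom_real K"
  shows "retraction f \<in> geom_real {\<sigma>\<in>K. u \<notin> \<sigma>}"
    and "support (push f) \<union> support (retraction f) \<in> K"
proof -
  define d where "d = 1 - min (f u) (1/4)"
  have d: "d > 0"
    by (simp add: d_def)
  have g: "\<forall>v. 0 \<le> push f v" "support (push f) \<in> K" "sum (push f) V = 1"
    using push_mem[OF assms] by (auto simp: mem_geom_real_K)
  have push_u: "push f u = min (f u) (1/4)"
    using distinct by (simp add: push_def)
  have retraction: "retraction f = (\<lambda>v. ((push f)(u := 0)) v / d)"
    by (simp add: retraction_def d_def)
  have "support (retraction f) \<subseteq> support (push f)"
    using d by (auto simp: retraction support_def)
  then show joint: "support (push f) \<union> support (retraction f) \<in> K"
    using g(2) by (simp add: Un_absorb2)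
  have "sum ((push f)(u := 0)) V = sum (push f) V - push f u"
    using vertices finite_vertices by (simp add: sum.remove[of V u])
  then have "sum (retraction f) V = 1"
    using g(3) d by (simp add: retraction push_u d_def flip: sum_divide_distrib)
  moreover have "\<forall>v. 0 \<le> retraction f v"
    using g(1) d by (simp add: retraction)
  moreover have "retraction f u = 0"
    by (simp add: retraction)
  ultimately show "retraction f \<in> geom_real {\<sigma>\<in>K. u \<notin> \<sigma>}"
    using face_subset[OF joint] by (simp add: mem_geom_real_delete mem_geom_real_K)
qed

lemma retraction_fixes:
  assumes "f u = 0"
  shows "retraction f = f"
proof -
  have "push f = f"
    using assms by (simp add: push_def slide_def)
  then show ?thesis
    using assms by (auto simp: retraction_def)
qed

lemma continuous_on_slide: "continuous_on S slide"
  unfolding slide_def move_mass_def by (intro continuous_intros)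

lemma continuous_on_push: "continuous_on S push"
  unfolding push_def move_mass_def
  by (intro continuous_intros continuous_on_slide
      continuous_on_product_then_coordinatewise[OF continuous_on_slide])

lemma continuous_on_retraction: "continuous_on S retraction"
proof (rule continuous_on_coordinatewise_then_product)
  fix v
  have "continuous_on S (\<lambda>f. push f v)"
    using continuous_on_product_then_coordinatewise[OF continuous_on_push] .
  moreover have "1 - min (f u) (1/4) \<noteq> 0" for f :: "'v \<Rightarrow> real"
    by linarith
  ultimately show "continuous_on S (\<lambda>f. retraction f v)"
    unfolding retraction_def by (cases "v = u") (simp_all add: continuous_intros)
qed

theorem homotopy_equivalent_delete_vertex:
  "top_of_set (geom_real K) homotopy_equivalent_space top_of_set (geom_real {\<sigma>\<in>K. u \<notin> \<sigma>})"
proof (rule deformation_retraction_imp_homotopy_equivalent_space)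
  let ?X = "geom_real K" and ?Y = "geom_real {\<sigma>\<in>K. u \<notin> \<sigma>}"
  note homotopic_with_trans [trans]
  have "homotopic_with (\<lambda>_. True) (top_of_set ?X) (top_of_set ?X) id slide"
    using slide_mem
    by (intro homotopic_geom_real_straight_line[OF complex])
      (auto simp: continuous_on_id continuous_on_slide)
  also have "homotopic_with (\<lambda>_. True) (top_of_set ?X) (top_of_set ?X) slide push"
    using slide_mem push_mem
    by (intro homotopic_geom_real_straight_line[OF complex])
      (auto simp: continuous_on_slide continuous_on_push)
  also have "homotopic_with (\<lambda>_. True) (top_of_set ?X) (top_of_set ?X) push retraction"
    using push_mem retraction_mem
    by (intro homotopic_geom_real_straight_line[OF complex])
      (auto simp: continuous_on_push continuous_on_retraction mem_geom_real_delete)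
  finally show "homotopic_with (\<lambda>_. True) (top_of_set ?X) (top_of_set ?X) (id \<circ> retraction) id"
    by (simp add: homotopic_with_sym)
  show "retraction_maps (top_of_set ?X) (top_of_set ?Y) retraction id"
    using retraction_mem
    by (auto simp: retraction_maps_def continuous_map_subtopology_eu continuous_on_retraction
        mem_geom_real_delete retraction_fixes)
qed

end

section \<open>Complexes of 2-matchings\<close>

lemma finite_complex_two_matchings:
  assumes "finite E"
  shows "finite_complex E (two_matchings E)"
proof -
  have "card {e\<in>\<tau>. v \<in> e} \<le> card {e\<in>\<sigma>. v \<in> e}" if "\<sigma> \<subseteq> E" "\<tau> \<subseteq> \<sigma>" for \<sigma> \<tau> v
    using that assms by (intro card_mono) (auto intro: finite_subset)
  then show ?thesis
    using assms unfolding finite_complex_def two_matchings_def by (blast intro: order_trans)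
qed

lemma two_matchings_delete: "{\<sigma> \<in> two_matchings E. u \<notin> \<sigma>} = two_matchings (E - {u})"
  by (auto simp: two_matchings_def)

lemma two_matching_not_three_edges_at:
  assumes "finite E" "\<sigma> \<in> two_matchings E" "x \<in> u" "x \<in> a" "x \<in> b" "distinct [u, a, b]"
  shows "\<not> {u, a, b} \<subseteq> \<sigma>"
proof
  assume "{u, a, b} \<subseteq> \<sigma>"
  then have "{u, a, b} \<subseteq> {e\<in>\<sigma>. x \<in> e}"
    using assms(3-5) by auto
  then have "card {u, a, b} \<le> card {e\<in>\<sigma>. x \<in> e}"
    using assms(1,2) by (intro card_mono) (auto simp: two_matchings_def intro: finite_subset)
  then show False
    using assms(2,6) by (auto simp: two_matchings_def dest: spec[of _ x])
qed

lemma card_incident_insert_le: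
  assumes "finite E" "\<sigma> \<subseteq> E" "A \<subseteq> {e\<in>E. v \<in> e}" "p \<in> A" "A \<inter> \<sigma> = {}"
  shows "card {e \<in> insert p \<sigma>. v \<in> e} \<le> deg E v - card A + 1"
proof -
  have "{e \<in> insert p \<sigma>. v \<in> e} \<subseteq> insert p ({e\<in>E. v \<in> e} - A)"
    using assms(2,5) by auto
  then have "card {e \<in> insert p \<sigma>. v \<in> e} \<le> card (insert p ({e\<in>E. v \<in> e} - A))"
    using assms(1) by (intro card_mono) auto
  also have "\<dots> \<le> card ({e\<in>E. v \<in> e} - A) + 1"
    using assms(1) by (simp add: card_insert_if)
  also have "\<dots> = deg E v - card A + 1"
    using assms(1,3) by (simp add: card_Diff_subset deg_def finite_subset)
  finally show ?thesis .
qed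

lemma two_matchings_insert_pendant_edge:
  assumes "finite E" and \<sigma>: "\<sigma> \<in> two_matchings E"
    and p: "{z, z'} \<in> E" and a: "a \<in> E" "z \<in> a" "a \<noteq> {z, z'}" "a \<notin> \<sigma>"
    and deg: "deg E z \<le> 3" "deg E z' \<le> 1"
  shows "insert {z, z'} \<sigma> \<in> two_matchings E"
proof (cases "{z, z'} \<in> \<sigma>")
  case False
  have \<sigma>E: "\<sigma> \<subseteq> E"
    using \<sigma> by (simp add: two_matchings_def)
  have "card {e \<in> insert {z, z'} \<sigma>. v \<in> e} \<le> 2" for v
  proof (cases "v \<in> {z, z'}")
    case True
    have "card {e \<in> insert {z, z'} \<sigma>. z \<in> e} \<le> deg E z - card {a, {z, z'}} + 1"
      using False a p by (intro card_incident_insert_le[OF \<open>finite E\<close> \<sigma>E]) auto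
    moreover have "card {e \<in> insert {z, z'} \<sigma>. z' \<in> e} \<le> deg E z' - card {{z, z'}} + 1"
      using False p by (intro card_incident_insert_le[OF \<open>finite E\<close> \<sigma>E]) auto
    ultimately show ?thesis
      using True deg a(3) by auto
  next
    case False
    then have "{e \<in> insert {z, z'} \<sigma>. v \<in> e} = {e\<in>\<sigma>. v \<in> e}"
      by auto
    then show ?thesis
      using \<sigma> by (simp add: two_matchings_def)
  qed
  then show ?thesis
    using \<sigma>E p by (simp add: two_matchings_def)
qed (use \<sigma> in \<open>simp add: insert_absorb\<close>)

theorem homotopy_equivalent_two_matchings_delete_edge:
  assumes "finite E"
    and x: "u \<in> E" "a \<in> E" "b \<in> E" "x \<in> u" "x \<in> a" "x \<in> b" "distinct [u, a, b]"
    and z: "{z, z'} \<in> E" "z \<in> a" "deg E z \<le> 3" "deg E z' \<le> 1"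
    and y: "{y, y'} \<in> E" "y \<in> b" "deg E y \<le> 3" "deg E y' \<le> 1"
    and pendant_edges: "{z, z'} \<notin> {u, a, b}" "{y, y'} \<notin> {u, b}"
  shows "top_of_set (geom_real (two_matchings E)) homotopy_equivalent_space
         top_of_set (geom_real (two_matchings (E - {u})))"
proof -
  interpret removable_vertex E "two_matchings E" u b "{z, z'}" "{y, y'}"
  proof
    show "finite_complex E (two_matchings E)"
      using \<open>finite E\<close> by (rule finite_complex_two_matchings)
    show "u \<in> E" "b \<in> E" "{z, z'} \<in> E" "{y, y'} \<in> E"
      using x(1,3) z(1) y(1) .
    show "u \<noteq> b" "u \<noteq> {z, z'}" "b \<noteq> {z, z'}" "u \<noteq> {y, y'}"
      using x(7) pendant_edges by auto
  next
    fix \<sigma> assume \<sigma>: "\<sigma> \<in> two_matchings E" "u \<in> \<sigma>" "b \<in> \<sigma>"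
    then have "a \<notin> \<sigma>"
      using two_matching_not_three_edges_at[OF \<open>finite E\<close> \<sigma>(1) x(4-7)] by auto
    then show "insert {z, z'} \<sigma> \<in> two_matchings E"
      using pendant_edges
      by (intro two_matchings_insert_pendant_edge[OF \<open>finite E\<close> \<sigma>(1) z(1) x(2) z(2) _ _ z(3,4)]) auto
  next
    fix \<sigma> assume \<sigma>: "\<sigma> \<in> two_matchings E" "u \<in> \<sigma>" "b \<notin> \<sigma>"
    then show "insert {y, y'} \<sigma> \<in> two_matchings E"
      using pendant_edges
      by (intro two_matchings_insert_pendant_edge[OF \<open>finite E\<close> \<sigma>(1) y(1) x(3) y(2) _ _ y(3,4)]) auto
  qed
  show ?thesis
    using homotopy_equivalent_delete_vertex by (simp add: two_matchings_delete)
qed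

lemma card_incident_image:
  assumes inj: "inj_on \<phi> (\<Union>E)" and "\<sigma> \<subseteq> E" "v \<in> \<Union>E"
  shows "card {e'\<in>(`) \<phi> ` \<sigma>. \<phi> v \<in> e'} = card {e\<in>\<sigma>. v \<in> e}"
proof -
  have mem: "\<phi> v \<in> \<phi> ` e \<longleftrightarrow> v \<in> e" if "e \<in> \<sigma>" for e
  proof (rule inj_on_image_mem_iff[OF inj \<open>v \<in> \<Union>E\<close>])
    show "e \<subseteq> \<Union>E"
      using that \<open>\<sigma> \<subseteq> E\<close> by auto
  qed
  have "{e'\<in>(`) \<phi> ` \<sigma>. \<phi> v \<in> e'} = (`) \<phi> ` {e\<in>\<sigma>. \<phi> v \<in> \<phi> ` e}"
    by auto
  also have "{e\<in>\<sigma>. \<phi> v \<in> \<phi> ` e} = {e\<in>\<sigma>. v \<in> e}"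
    using mem by auto
  finally have "{e'\<in>(`) \<phi> ` \<sigma>. \<phi> v \<in> e'} = (`) \<phi> ` {e\<in>\<sigma>. v \<in> e}" .
  moreover have "inj_on ((`) \<phi>) {e\<in>\<sigma>. v \<in> e}"
    by (rule inj_on_subset[OF inj_on_image[OF inj]]) (use \<open>\<sigma> \<subseteq> E\<close> in auto)
  ultimately show ?thesis
    by (simp add: card_image)
qed

lemma image_mem_two_matchings_iff:
  assumes inj: "inj_on \<phi> (\<Union>E)" and "\<sigma> \<subseteq> E"
  shows "(`) \<phi> ` \<sigma> \<in> two_matchings ((`) \<phi> ` E) \<longleftrightarrow> \<sigma> \<in> two_matchings E"
proof -
  have "card {e'\<in>(`) \<phi> ` \<sigma>. w \<in> e'} \<le> 2" if "\<forall>v. card {e\<in>\<sigma>. v \<in> e} \<le> 2" for w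
  proof (cases "w \<in> \<phi> ` \<Union>E")
    case True
    then obtain v where "v \<in> \<Union>E" "w = \<phi> v"
      by blast
    then show ?thesis
      using card_incident_image[OF assms] that by simp
  next
    case False
    then have none: "{e'\<in>(`) \<phi> ` \<sigma>. w \<in> e'} = {}"
      using \<open>\<sigma> \<subseteq> E\<close> by auto
    show ?thesis
      by (subst none) simp
  qed
  moreover have "card {e\<in>\<sigma>. v \<in> e} \<le> 2" if "\<forall>w. card {e'\<in>(`) \<phi> ` \<sigma>. w \<in> e'} \<le> 2" for v
  proof (cases "v \<in> \<Union>E")
    case True
    then show ?thesis
      using card_incident_image[OF assms True] that by (metis (no_types))
  next
    case False
    then have none: "{e\<in>\<sigma>. v \<in> e} = {}"
      using \<open>\<sigma> \<subseteq> E\<close> by auto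
    show ?thesis
      by (subst none) simp
  qed
  moreover have "(`) \<phi> ` \<sigma> \<subseteq> (`) \<phi> ` E"
    using \<open>\<sigma> \<subseteq> E\<close> by (rule image_mono)
  ultimately show ?thesis
    using \<open>\<sigma> \<subseteq> E\<close> unfolding two_matchings_def mem_Collect_eq by blast
qed

lemma homeomorphic_two_matchings_image:
  assumes "finite E" and inj: "inj_on \<phi> (\<Union>E)"
  shows "top_of_set (geom_real (two_matchings E)) homeomorphic_space
         top_of_set (geom_real (two_matchings ((`) \<phi> ` E)))"
proof (rule homeomorphic_geom_real_if_isomorphic[OF \<open>finite E\<close>])
  show "bij_betw ((`) \<phi>) E ((`) \<phi> ` E)"
    using inj_on_image[OF inj] by (simp add: bij_betw_def)
  show "two_matchings E \<subseteq> Pow E" "two_matchings ((`) \<phi> ` E) \<subseteq> Pow ((`) \<phi> ` E)"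
    by (auto simp: two_matchings_def)
  show "\<sigma> \<in> two_matchings E \<longleftrightarrow> (`) \<phi> ` \<sigma> \<in> two_matchings ((`) \<phi> ` E)" if "\<sigma> \<subseteq> E" for \<sigma>
    using image_mem_two_matchings_iff[OF inj that] by simp
qed

section \<open>Cycles and whiskers\<close>

lemma Suc_mod_inj:
  assumes "i < n" "j < n" "Suc i mod n = Suc j mod n"
  shows "i = j"
  using assms by (auto simp: mod_Suc split: if_splits)

lemma Suc_Suc_double_mod: "Suc (Suc (2 * j)) mod (2 * n) = 2 * (Suc j mod n)"
proof -
  have "Suc (Suc (2 * j)) = 2 * Suc j"
    by simp
  then show ?thesis
    by (simp only: mult_mod_right)
qed

lemma cycle_predecessor:
  assumes "v < n"
  obtains p where "p < n" "Suc p mod n = v"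
proof
  show "(if v = 0 then n - 1 else v - 1) < n" "Suc (if v = 0 then n - 1 else v - 1) mod n = v"
    using assms by auto
qed

lemma cycle_edges_eq_image: "cycle_edges m = (\<lambda>i. {i, Suc i mod m}) ` {..<m}"
  by (auto simp: cycle_edges_def)

lemma cycle_edge_mem: "i < n \<Longrightarrow> {i, Suc i mod n} \<in> cycle_edges n"
  by (auto simp: cycle_edges_def)

lemma cycle_edges_doubleton: "e \<in> cycle_edges m \<Longrightarrow> \<exists>p q. e = {p, q}"
  by (auto simp: cycle_edges_def)

lemma Union_cycle_edges: "\<Union> (cycle_edges m) \<subseteq> {..<m}"
  by (auto simp: cycle_edges_def)

lemma cycle_edge_eq_iff:
  assumes "3 \<le> n" "i < n" "j < n"
  shows "{i, Suc i mod n} = {j, Suc j mod n} \<longleftrightarrow> i = j"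
  using assms by (auto simp: doubleton_eq_iff mod_Suc split: if_splits)

lemma incident_cycle_edges:
  assumes "p < n" "Suc p mod n = v"
  shows "{e \<in> cycle_edges n. v \<in> e} = {{v, Suc v mod n}, {p, v}}"
proof
  show "{e \<in> cycle_edges n. v \<in> e} \<subseteq> {{v, Suc v mod n}, {p, v}}"
  proof
    fix e assume "e \<in> {e \<in> cycle_edges n. v \<in> e}"
    then obtain i where i: "i < n" "e = {i, Suc i mod n}" "v = i \<or> v = Suc i mod n"
      by (auto simp: cycle_edges_def)
    then have "e = {v, Suc v mod n} \<or> i = p"
      using Suc_mod_inj[OF i(1) assms(1)] assms(2) by auto
    then show "e \<in> {{v, Suc v mod n}, {p, v}}"
      using i(2) assms(2) by auto
  qed
  have "v < n"
    using assms by auto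
  then show "{{v, Suc v mod n}, {p, v}} \<subseteq> {e \<in> cycle_edges n. v \<in> e}"
    using assms cycle_edge_mem[of v n] cycle_edge_mem[of p n] by auto
qed

lemma deg_cycle_edges_le: "deg (cycle_edges n) v \<le> 2"
proof (cases "v < n")
  case True
  then obtain p where "p < n" "Suc p mod n = v"
    by (rule cycle_predecessor)
  then show ?thesis
    by (simp add: deg_def incident_cycle_edges card_insert_le_m1)
next
  case False
  then have none: "{e \<in> cycle_edges n. v \<in> e} = {}"
    by (auto simp: cycle_edges_def)
  show ?thesis
    by (simp add: deg_def none)
qed

lemma deg_cycle_edges:
  assumes "3 \<le> n" "v < n"
  shows "deg (cycle_edges n) v = 2"
proof -
  obtain p where p: "p < n" "Suc p mod n = v"
    using assms(2) by (rule cycle_predecessor)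
  have "p \<noteq> v"
    using p assms(1) by (auto simp: mod_Suc split: if_splits)
  then have "{v, Suc v mod n} \<noteq> {p, v}"
    using cycle_edge_eq_iff[OF assms(1) p(1) assms(2)] p(2) by auto
  then show ?thesis
    using p by (simp add: deg_def incident_cycle_edges)
qed

lemma Inl_edge_mem_whiskered_edges: "{p, q} \<in> E \<Longrightarrow> {Inl p, Inl q} \<in> whiskered_edges W E"
  by (auto simp: whiskered_edges_def)

lemma whisker_mem_whiskered_edges: "v \<in> W \<Longrightarrow> {Inl v, Inr v} \<in> whiskered_edges W E"
  by (auto simp: whiskered_edges_def)

lemma whiskered_edges_subset: "whiskered_edges W E \<subseteq> (`) Inl ` E \<union> (\<lambda>v. {Inl v, Inr v}) ` W"
proof
  fix e assume "e \<in> whiskered_edges W E"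
  then consider p q where "e = Inl ` {p, q}" "{p, q} \<in> E" | v where "e = {Inl v, Inr v}" "v \<in> W"
    unfolding whiskered_edges_def by auto
  then show "e \<in> (`) Inl ` E \<union> (\<lambda>v. {Inl v, Inr v}) ` W"
    by cases blast+
qed

lemma whiskered_edges_eq:
  assumes "\<And>e. e \<in> E \<Longrightarrow> \<exists>p q. e = {p, q}"
  shows "whiskered_edges W E = (`) Inl ` E \<union> (\<lambda>v. {Inl v, Inr v}) ` W"
proof
  show "(`) Inl ` E \<union> (\<lambda>v. {Inl v, Inr v}) ` W \<subseteq> whiskered_edges W E"
  proof
    fix e assume "e \<in> (`) Inl ` E \<union> (\<lambda>v. {Inl v, Inr v}) ` W"
    then show "e \<in> whiskered_edges W E"
    proof
      assume "e \<in> (`) Inl ` E"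
      then obtain e' where "e' \<in> E" "e = Inl ` e'"
        by blast
      moreover obtain p q where "e' = {p, q}"
        using assms \<open>e' \<in> E\<close> by blast
      ultimately show ?thesis
        by (simp add: Inl_edge_mem_whiskered_edges)
    next
      assume "e \<in> (\<lambda>v. {Inl v, Inr v}) ` W"
      then show ?thesis
        by (auto intro: whisker_mem_whiskered_edges)
    qed
  qed
qed (rule whiskered_edges_subset)

lemma Union_whiskered_edges: "\<Union> (whiskered_edges W E) \<subseteq> Inl ` (\<Union>E \<union> W) \<union> Inr ` W"
proof
  fix x assume "x \<in> \<Union> (whiskered_edges W E)"
  then obtain e where e: "e \<in> whiskered_edges W E" "x \<in> e"
    by blast
  have "e \<in> (`) Inl ` E \<union> (\<lambda>v. {Inl v, Inr v}) ` W"
    using whiskered_edges_subset e(1) ..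
  then show "x \<in> Inl ` (\<Union>E \<union> W) \<union> Inr ` W"
  proof
    assume "e \<in> (`) Inl ` E"
    then show ?thesis
      using e(2) by auto
  next
    assume "e \<in> (\<lambda>v. {Inl v, Inr v}) ` W"
    then show ?thesis
      using e(2) by auto
  qed
qed

lemma finite_whiskered_edges: "finite W \<Longrightarrow> finite E \<Longrightarrow> finite (whiskered_edges W E)"
  using whiskered_edges_subset by (rule finite_subset) auto

lemma whiskered_edges_insert_delete:
  assumes "w \<notin> W"
  shows "whiskered_edges (insert w W) E - {{Inl w, Inr w}} = whiskered_edges W E"
proof -
  have "whiskered_edges (insert w W) E = insert {Inl w, Inr w} (whiskered_edges W E)"
    by (auto simp: whiskered_edges_def)
  moreover have "{Inl w, Inr w} \<notin> whiskered_edges W E"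
    using assms by (auto simp: whiskered_edges_def doubleton_eq_iff)
  ultimately show ?thesis
    by simp
qed

lemma deg_whiskered_edges_Inl:
  assumes "finite E"
  shows "deg (whiskered_edges W E) (Inl v) \<le> deg E v + 1"
proof -
  have "{e \<in> whiskered_edges W E. Inl v \<in> e} \<subseteq> (`) Inl ` {e \<in> E. v \<in> e} \<union> {{Inl v, Inr v}}"
  proof
    fix e assume e: "e \<in> {e \<in> whiskered_edges W E. Inl v \<in> e}"
    then consider e' where "e = Inl ` e'" "e' \<in> E" | w where "e = {Inl w, Inr w}"
      using whiskered_edges_subset by blast
    then show "e \<in> (`) Inl ` {e \<in> E. v \<in> e} \<union> {{Inl v, Inr v}}"
      using e by cases auto
  qed
  then have "deg (whiskered_edges W E) (Inl v)
      \<le> card ((`) Inl ` {e \<in> E. v \<in> e} \<union> {{Inl v, Inr v}})"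
    unfolding deg_def using assms by (intro card_mono) auto
  also have "\<dots> \<le> card ((`) (Inl :: 'a \<Rightarrow> 'a + 'a) ` {e \<in> E. v \<in> e}) + 1"
    by (rule order_trans[OF card_Un_le]) simp
  also have "\<dots> \<le> deg E v + 1"
    unfolding deg_def using card_image_le[of "{e \<in> E. v \<in> e}" "(`) Inl"] assms by simp
  finally show ?thesis .
qed

lemma deg_whiskered_edges_Inr: "deg (whiskered_edges W E) (Inr v) \<le> 1"
proof -
  have "{e \<in> whiskered_edges W E. Inr v \<in> e} \<subseteq> {{Inl v, Inr v}}"
    by (auto simp: whiskered_edges_def)
  then show ?thesis
    unfolding deg_def using card_mono[of "{{Inl v, Inr v}}"] by fastforce
qed

section \<open>From the whiskered to the clawed cycle\<close>

definition partly_whiskered_cycle :: "nat \<Rightarrow> nat \<Rightarrow> (nat + nat) set set" where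
  "partly_whiskered_cycle n m =
     whiskered_edges {v. v < 2 * n \<and> (even v \<or> v < 2 * m)} (cycle_edges (2 * n))"

lemma partly_whiskered_cycle_full:
  "partly_whiskered_cycle n n = whiskered_edges (cycle_vertices (2 * n)) (cycle_edges (2 * n))"
proof -
  have "{v. v < 2 * n \<and> (even v \<or> v < 2 * n)} = cycle_vertices (2 * n)"
    by (auto simp: cycle_vertices_def)
  then show ?thesis
    by (simp add: partly_whiskered_cycle_def)
qed

lemma finite_partly_whiskered_cycle: "finite (partly_whiskered_cycle n m)"
  unfolding partly_whiskered_cycle_def
  by (rule finite_whiskered_edges) (auto simp: cycle_edges_eq_image)

lemma deg_partly_whiskered_cycle:
  "deg (partly_whiskered_cycle n m) (Inl v) \<le> 3" "deg (partly_whiskered_cycle n m) (Inr v) \<le> 1"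
proof -
  have "deg (partly_whiskered_cycle n m) (Inl v) \<le> deg (cycle_edges (2 * n)) v + 1"
    unfolding partly_whiskered_cycle_def
    by (rule deg_whiskered_edges_Inl) (simp add: cycle_edges_eq_image)
  then show "deg (partly_whiskered_cycle n m) (Inl v) \<le> 3"
    using deg_cycle_edges_le[of "2 * n" v] by simp
  show "deg (partly_whiskered_cycle n m) (Inr v) \<le> 1"
    unfolding partly_whiskered_cycle_def by (rule deg_whiskered_edges_Inr)
qed

lemma cycle_edge_mem_partly_whiskered_cycle:
  "i < 2 * n \<Longrightarrow> {Inl i, Inl (Suc i mod (2 * n))} \<in> partly_whiskered_cycle n m"
  unfolding partly_whiskered_cycle_def by (intro Inl_edge_mem_whiskered_edges cycle_edge_mem)

lemma whisker_mem_partly_whiskered_cycle: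
  "v < 2 * n \<Longrightarrow> even v \<or> v < 2 * m \<Longrightarrow> {Inl v, Inr v} \<in> partly_whiskered_cycle n m"
  unfolding partly_whiskered_cycle_def by (intro whisker_mem_whiskered_edges) simp

lemma partly_whiskered_cycle_delete_whisker:
  assumes "j < n"
  shows "partly_whiskered_cycle n (Suc j) - {{Inl (Suc (2 * j)), Inr (Suc (2 * j))}}
    = partly_whiskered_cycle n j"
proof -
  have "{v. v < 2 * n \<and> (even v \<or> v < 2 * Suc j)}
      = insert (Suc (2 * j)) {v. v < 2 * n \<and> (even v \<or> v < 2 * j)}"
    using assms by (auto simp: less_Suc_eq)
  then show ?thesis
    by (simp add: partly_whiskered_cycle_def whiskered_edges_insert_delete)
qed

lemma homotopy_equivalent_partly_whiskered_cycle_step: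
  assumes "2 \<le> n" "j < n"
  shows "top_of_set (geom_real (two_matchings (partly_whiskered_cycle n (Suc j))))
           homotopy_equivalent_space
         top_of_set (geom_real (two_matchings (partly_whiskered_cycle n j)))"
proof -
  define y where "y = 2 * (Suc j mod n)"
  have y: "y < 2 * n" "even y" "y \<noteq> 2 * j" "y \<noteq> Suc (2 * j)" "Suc (Suc (2 * j)) mod (2 * n) = y"
    using assms by (auto simp: y_def mod_Suc Suc_Suc_double_mod)
  have edges:
    "{Inl (Suc (2 * j)), Inr (Suc (2 * j))} \<in> partly_whiskered_cycle n (Suc j)"
    "{Inl (2 * j), Inl (Suc (2 * j))} \<in> partly_whiskered_cycle n (Suc j)"
    "{Inl (Suc (2 * j)), Inl y} \<in> partly_whiskered_cycle n (Suc j)"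
    "{Inl (2 * j), Inr (2 * j)} \<in> partly_whiskered_cycle n (Suc j)"
    "{Inl y, Inr y} \<in> partly_whiskered_cycle n (Suc j)"
    using assms y cycle_edge_mem_partly_whiskered_cycle[of "2 * j" n "Suc j"]
      cycle_edge_mem_partly_whiskered_cycle[of "Suc (2 * j)" n "Suc j"]
    by (auto intro: whisker_mem_partly_whiskered_cycle)
  have "top_of_set (geom_real (two_matchings (partly_whiskered_cycle n (Suc j))))
          homotopy_equivalent_space
        top_of_set (geom_real (two_matchings (partly_whiskered_cycle n (Suc j)
          - {{Inl (Suc (2 * j)), Inr (Suc (2 * j))}})))"
    by (rule homotopy_equivalent_two_matchings_delete_edge[where x = "Inl (Suc (2 * j))",
          OF finite_partly_whiskered_cycle edges(1-3) _ _ _ _ edges(4) _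
          deg_partly_whiskered_cycle edges(5) _ deg_partly_whiskered_cycle])
      (use y in \<open>simp_all add: doubleton_eq_iff\<close>)
  then show ?thesis
    by (simp add: partly_whiskered_cycle_delete_whisker[OF assms(2)])
qed

lemma homotopy_equivalent_partly_whiskered_cycle:
  assumes "2 \<le> n" "m \<le> n"
  shows "top_of_set (geom_real (two_matchings (partly_whiskered_cycle n m)))
           homotopy_equivalent_space
         top_of_set (geom_real (two_matchings (partly_whiskered_cycle n 0)))"
  using assms(2)
proof (induction m)
  case 0
  show ?case
    by (rule homotopy_equivalent_space_refl)
next
  case (Suc m)
  then have "m < n"
    by simp
  show ?case
    using homotopy_eqv_trans[OF homotopy_equivalent_partly_whiskered_cycle_step[OF assms(1) \<open>m < n\<close>]
        Suc.IH] Suc.prems by simp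
qed

lemma cycle_edges_double_length:
  "cycle_edges (2 * n) =
     (\<lambda>k. {2 * k, Suc (2 * k)}) ` {..<n} \<union> (\<lambda>k. {Suc (2 * k), 2 * (Suc k mod n)}) ` {..<n}"
proof -
  have "{..<2 * n} = (\<lambda>k. 2 * k) ` {..<n} \<union> (\<lambda>k. Suc (2 * k)) ` {..<n}"
  proof
    show "{..<2 * n} \<subseteq> (\<lambda>k. 2 * k) ` {..<n} \<union> (\<lambda>k. Suc (2 * k)) ` {..<n}"
    proof
      fix v assume "v \<in> {..<2 * n}"
      then show "v \<in> (\<lambda>k. 2 * k) ` {..<n} \<union> (\<lambda>k. Suc (2 * k)) ` {..<n}"
        by (cases "even v") (auto elim!: evenE oddE)
    qed
  qed auto
  moreover have "(\<lambda>k. {2 * k, Suc (2 * k) mod (2 * n)}) ` {..<n} = (\<lambda>k. {2 * k, Suc (2 * k)}) ` {..<n}"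
    by (rule image_cong) auto
  ultimately show ?thesis
    by (simp add: cycle_edges_eq_image image_Un image_image Suc_Suc_double_mod)
qed

lemma clawed_cycle_edges:
  assumes "3 \<le> n"
  shows "clawed_edges (cycle_vertices n) (cycle_edges n) =
     (\<lambda>k. {Orig k, Sub {k, Suc k mod n}}) ` {..<n}
     \<union> (\<lambda>k. {Sub {k, Suc k mod n}, Orig (Suc k mod n)}) ` {..<n}
     \<union> (\<lambda>k. {Orig k, Leaf k 0}) ` {..<n}"
proof -
  have "{{Orig u, Sub e} | u e. e \<in> cycle_edges n \<and> u \<in> e} =
     (\<lambda>k. {Orig k, Sub {k, Suc k mod n}}) ` {..<n}
     \<union> (\<lambda>k. {Sub {k, Suc k mod n}, Orig (Suc k mod n)}) ` {..<n}"
    by (auto simp: cycle_edges_def insert_commute)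
  moreover have "{{Orig v, Leaf v k} | v k. v \<in> cycle_vertices n \<and> k < 3 - deg (cycle_edges n) v} =
     (\<lambda>k. {Orig k, Leaf k 0}) ` {..<n}"
    using deg_cycle_edges[OF assms] by (force simp: cycle_vertices_def)
  ultimately show ?thesis
    by (simp add: clawed_edges_def)
qed

text \<open>Vertex \<open>2k\<close> of the \<open>2n\<close>-cycle is vertex \<open>k\<close> of the \<open>n\<close>-cycle, vertex \<open>2k + 1\<close>
  subdivides the edge \<open>{k, k + 1}\<close>, and the whisker at \<open>2k\<close> is the single leaf at \<open>k\<close>.
  Whiskers at odd vertices, absent for \<open>m = 0\<close>, collide with those at their even neighbours.\<close>

definition cycle_to_claw :: "nat \<Rightarrow> nat + nat \<Rightarrow> nat claw_vertex" where
  "cycle_to_claw n = case_sum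
     (\<lambda>v. if even v then Orig (v div 2) else Sub {v div 2, Suc (v div 2) mod n})
     (\<lambda>v. Leaf (v div 2) 0)"

lemma image_cycle_to_claw:
  assumes "3 \<le> n"
  shows "(`) (cycle_to_claw n) ` partly_whiskered_cycle n 0
    = clawed_edges (cycle_vertices n) (cycle_edges n)"
proof -
  have "{v. v < 2 * n \<and> (even v \<or> v < 2 * 0)} = (\<lambda>k. 2 * k) ` {..<n}"
    by (auto elim!: evenE)
  then have "partly_whiskered_cycle n 0 =
      (`) Inl ` cycle_edges (2 * n) \<union> (\<lambda>v. {Inl v, Inr v}) ` (\<lambda>k. 2 * k) ` {..<n}"
    by (simp add: partly_whiskered_cycle_def whiskered_edges_eq cycle_edges_doubleton)
  then show ?thesis
    by (simp add: clawed_cycle_edges[OF assms] cycle_edges_double_length image_Un image_image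
        cycle_to_claw_def)
qed

lemma cycle_to_claw_Inl_inj:
  assumes "3 \<le> n" "v < 2 * n" "w < 2 * n" "cycle_to_claw n (Inl v) = cycle_to_claw n (Inl w)"
  shows "v = w"
proof -
  have half: "v div 2 < n" "w div 2 < n"
    using assms by auto
  have "v div 2 = w div 2 \<and> (even v \<longleftrightarrow> even w)"
    by (cases "even v"; cases "even w")
      (use assms(4) cycle_edge_eq_iff[OF assms(1) half] in \<open>simp_all add: cycle_to_claw_def\<close>)
  then show "v = w"
    by (metis even_two_times_div_two odd_two_times_div_two_succ)
qed

lemma inj_on_cycle_to_claw:
  assumes "3 \<le> n"
  shows "inj_on (cycle_to_claw n) (\<Union> (partly_whiskered_cycle n 0))"
proof (rule inj_on_subset)
  let ?W = "{v. v < 2 * n \<and> (even v \<or> v < 2 * 0)}"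
  have "\<Union> (partly_whiskered_cycle n 0) \<subseteq> Inl ` (\<Union> (cycle_edges (2 * n)) \<union> ?W) \<union> Inr ` ?W"
    unfolding partly_whiskered_cycle_def by (rule Union_whiskered_edges)
  also have "\<dots> \<subseteq> Inl ` {..<2 * n} \<union> Inr ` {v. even v}"
    using Union_cycle_edges[of "2 * n"] by auto
  finally show "\<Union> (partly_whiskered_cycle n 0) \<subseteq> Inl ` {..<2 * n} \<union> Inr ` {v. even v}" .
  show "inj_on (cycle_to_claw n) (Inl ` {..<2 * n} \<union> Inr ` {v. even v})"
  proof (rule inj_onI)
    fix x y assume x: "x \<in> Inl ` {..<2 * n} \<union> Inr ` {v. even v}"
      and y: "y \<in> Inl ` {..<2 * n} \<union> Inr ` {v. even v}"
      and eq: "cycle_to_claw n x = cycle_to_claw n y"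
    show "x = y"
    proof (cases x; cases y)
      fix v w assume xy: "x = Inl v" "y = Inl w"
      then have "v < 2 * n" "w < 2 * n"
        using x y by auto
      then show "x = y"
        using cycle_to_claw_Inl_inj[OF assms] eq xy by simp
    next
      fix v w assume xy: "x = Inr v" "y = Inr w"
      then have "even v" "even w" "v div 2 = w div 2"
        using x y eq by (auto simp: cycle_to_claw_def)
      then show "x = y"
        using xy by (metis even_two_times_div_two)
    qed (use eq in \<open>simp_all add: cycle_to_claw_def split: if_splits\<close>)
  qed
qed

theorem mainTheorem9:
  fixes n :: nat
  assumes "n \<ge> 3"
  shows "(top_of_set (geom_real (two_matchings
              (whiskered_edges (cycle_vertices (2 * n)) (cycle_edges (2 * n))))))
           homotopy_equivalent_space
         (top_of_set (geom_real (two_matchings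
              (clawed_edges (cycle_vertices n) (cycle_edges n)))))"
proof -
  note homotopy_eqv_trans [trans]
  have "top_of_set (geom_real (two_matchings (partly_whiskered_cycle n n)))
          homotopy_equivalent_space
        top_of_set (geom_real (two_matchings (partly_whiskered_cycle n 0)))"
    using assms by (intro homotopy_equivalent_partly_whiskered_cycle) auto
  also have "top_of_set (geom_real (two_matchings (partly_whiskered_cycle n 0)))
          homotopy_equivalent_space
        top_of_set (geom_real (two_matchings (clawed_edges (cycle_vertices n) (cycle_edges n))))"
    using homeomorphic_two_matchings_image[OF finite_partly_whiskered_cycle inj_on_cycle_to_claw[OF assms]]
    by (simp add: image_cycle_to_claw[OF assms] homeomorphic_imp_homotopy_equivalent_space)
  finally show ?thesis
    by (simp add: partly_whiskered_cycle_full)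
qed

end
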